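(* Let $N\ge2$ and $P\ge0$ be integers and let $\lambda$ be an element of a commutative ring. Then $\mathbb{HD}^P_{N+1}(\lambda)$ is the coefficient of the monomial $\prod_{i=0}^Nx_i^P$ in the polynomial \[ \Big(\lambda\sum_{i=0}^Nx_i^{N+1}-(N+1)\prod_{i=0}^Nx_i\Big)^{P}. \]
   Context: For natural numbers $P,M$ the Hasse--Dwork polynomial is \[ \mathbb{HD}^P_M(X)=(-M)^P\Big(1+M!\sum_{i=1}^{[P/M]}\binom{P}{M\times i}\Big(\frac{X}{-M}\Big)^{iM}\Big), \] where $M!\binom{P}{M\times i}=\binom{P}{i}\binom{P-i}{i}\binom{P-2i}{i}\cdots\binom{P-(M-1)i}{i}$; equivalently $\mathbb{HD}^P_M(X)=\sum_{i=0}^{[P/M]}M!\binom{P}{M\times i}(-M)^{P-iM}X^{iM}$, a polynomial with integer coefficients. *)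

theory Defs
  imports Main "HOL-Library.Poly_Mapping"
begin

text \<open>Multivariate polynomials in variables x_0, x_1, ... over a commutative ring 'a,
  represented as finitely supported maps from monomials (exponent vectors) to coefficients, with convolution multiplication.\<close>

type_synonym 'a mpoly = "(nat \<Rightarrow>\<^sub>0 nat) \<Rightarrow>\<^sub>0 'a"

definition mpVar :: "nat \<Rightarrow> 'a::comm_ring_1 mpoly" where
  "mpVar i = Poly_Mapping.single (Poly_Mapping.single i 1) 1"

definition mpConst :: "'a::comm_ring_1 \<Rightarrow> 'a mpoly" where
  "mpConst c = Poly_Mapping.single 0 c"

definition mpCoeff :: "'a::comm_ring_1 mpoly \<Rightarrow> (nat \<Rightarrow>\<^sub>0 nat) \<Rightarrow> 'a" where
  "mpCoeff p m = Poly_Mapping.lookup p m"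

text \<open>M! binom(P, M x i) = binom(P,i) binom(P-i,i) ... binom(P-(M-1)i, i).\<close>
definition multi_binom :: "nat \<Rightarrow> nat \<Rightarrow> nat \<Rightarrow> nat" where
  "multi_binom P M i = (\<Prod>j<M. (P - j * i) choose i)"

definition HD :: "nat \<Rightarrow> nat \<Rightarrow> 'a::comm_ring_1 \<Rightarrow> 'a" where
  "HD P M X = (\<Sum>i = 0..P div M.
      of_nat (multi_binom P M i) * (- of_nat M) ^ (P - i * M) * X ^ (i * M))"

end

theory Submission
  imports Defs
begin

text \<open>Write d = N + 1 and expand the P-th power binomially. The summand containing
  (-d x_0 ... x_N)^(P-k) reaches the monomial (x_0 ... x_N)^P only through the coefficient of
  (x_0 ... x_N)^k in (x_0^d + ... + x_N^d)^k. This multinomial coefficient vanishes unless k = d a,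
  and then equals k!/(a!)^d = prod_{j<d} binom((j+1) a, a); multiplied by binom(P, k) it becomes
  prod_{j<d} binom(P - j a, a), the coefficient of the Hasse--Dwork polynomial.\<close>

lemma lookup_single_add_mult:
  fixes p :: "'k::cancel_comm_monoid_add \<Rightarrow>\<^sub>0 'b::semiring_0"
  shows "Poly_Mapping.lookup (Poly_Mapping.single u c * p) (u + v) = c * Poly_Mapping.lookup p v"
proof -
  have "Poly_Mapping.lookup (Poly_Mapping.single u c * p) (u + v)
      = c * (\<Sum>q. Poly_Mapping.lookup p q when u + v = u + q)"
    by (simp add: lookup_mult lookup_single when_mult del: Sum_any.delta)
  also have "\<dots> = c * Poly_Mapping.lookup p v"
    by simp
  finally show ?thesis .
qed

lemma of_nat_mult_single:
  "of_nat m * Poly_Mapping.single u a = Poly_Mapping.single u (of_nat m * a)"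
  by (metis add_0 mult_single single_of_nat)

lemma lookup_mpConst_mult:
  "Poly_Mapping.lookup (mpConst c * p) m = c * Poly_Mapping.lookup p m"
  using lookup_single_add_mult[of 0 c p m] by (simp add: mpConst_def)

lemma mpConst_power: "mpConst c ^ k = mpConst (c ^ k)"
  by (induction k) (simp_all add: mpConst_def mult_single)

lemma mpVar_power: "mpVar i ^ k = Poly_Mapping.single (Poly_Mapping.single i k) 1"
  by (induction k) (simp_all add: mpVar_def mult_single single_add[symmetric] add.commute)

definition diag_exponent :: "nat \<Rightarrow> nat \<Rightarrow> nat \<Rightarrow>\<^sub>0 nat" where
  "diag_exponent n j = (\<Sum>i<n. Poly_Mapping.single i j)"

lemma diag_exponent_add: "diag_exponent n (j + k) = diag_exponent n j + diag_exponent n k"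
  by (simp add: diag_exponent_def single_add sum.distrib)

lemma diag_exponent_Suc: "diag_exponent (Suc n) j = diag_exponent n j + Poly_Mapping.single n j"
  by (simp add: diag_exponent_def)

lemma lookup_diag_exponent_self: "Poly_Mapping.lookup (diag_exponent n j) n = 0"
  by (simp add: diag_exponent_def lookup_sum lookup_single)

lemma prod_mpVar_power:
  "(\<Prod>i<n. mpVar i) ^ k = Poly_Mapping.single (diag_exponent n k) 1"
  by (induction n) (simp_all add: diag_exponent_def power_mult_distrib mpVar_power mult_single)

definition var_free :: "nat \<Rightarrow> 'a::zero mpoly \<Rightarrow> bool" where
  "var_free n p \<longleftrightarrow> (\<forall>m \<in> Poly_Mapping.keys p. Poly_Mapping.lookup m n = 0)"

lemma var_free_mult:
  "var_free n p \<Longrightarrow> var_free n q \<Longrightarrow> var_free n (p * q)"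
  unfolding var_free_def using keys_mult[of p q] by (force simp: lookup_add)

lemma var_free_power:
  fixes p :: "'a::comm_semiring_1 mpoly"
  shows "var_free n p \<Longrightarrow> var_free n (p ^ k)"
  by (induction k) (simp_all add: var_free_mult, simp add: var_free_def)

lemma var_free_sum:
  "(\<And>i. i \<in> I \<Longrightarrow> var_free n (f i)) \<Longrightarrow> var_free n (sum f I)"
  unfolding var_free_def
  by (induction I rule: infinite_finite_induct) (auto dest: set_mp[OF keys_add])

lemma var_free_mpVar_power: "i \<noteq> n \<Longrightarrow> var_free n (mpVar i ^ k)"
  by (simp add: var_free_def mpVar_power lookup_single)

lemma lookup_single_var_mult:
  assumes "var_free n p" and "Poly_Mapping.lookup m n = 0"
  shows "Poly_Mapping.lookup (Poly_Mapping.single (Poly_Mapping.single n e') c * p)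
           (m + Poly_Mapping.single n e)
       = (if e = e' then c * Poly_Mapping.lookup p m else 0)"
proof (cases "e = e'")
  case True
  then show ?thesis
    using lookup_single_add_mult[of "Poly_Mapping.single n e'" c p m] by (simp add: add.commute)
next
  case False
  have "m + Poly_Mapping.single n e \<notin> Poly_Mapping.keys (Poly_Mapping.single (Poly_Mapping.single n e') c * p)"
  proof
    assume "m + Poly_Mapping.single n e \<in> Poly_Mapping.keys (Poly_Mapping.single (Poly_Mapping.single n e') c * p)"
    then obtain q where "q \<in> Poly_Mapping.keys p" "m + Poly_Mapping.single n e = Poly_Mapping.single n e' + q"
      using keys_mult[of "Poly_Mapping.single (Poly_Mapping.single n e') c" p]
      by (auto split: if_splits)
    then have "Poly_Mapping.lookup (m + Poly_Mapping.single n e) n = e'"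
      using assms(1) by (simp add: var_free_def lookup_add)
    with assms(2) False show False
      by (simp add: lookup_add)
  qed
  with False show ?thesis
    by (simp add: in_keys_iff)
qed

lemma lookup_power_add_var_power:
  assumes "var_free n p" and "Poly_Mapping.lookup m n = 0"
  shows "Poly_Mapping.lookup ((mpVar n ^ d + p) ^ k) (m + Poly_Mapping.single n e)
       = (\<Sum>t\<le>k. if e = d * t then of_nat (k choose t) * Poly_Mapping.lookup (p ^ (k - t)) m else 0)"
proof -
  have "(mpVar n ^ d + p) ^ k = (\<Sum>t\<le>k. of_nat (k choose t) * mpVar n ^ (d * t) * p ^ (k - t))"
    by (simp add: binomial_ring power_mult)
  also have "\<dots> = (\<Sum>t\<le>k. Poly_Mapping.single (Poly_Mapping.single n (d * t)) (of_nat (k choose t)) * p ^ (k - t))"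
    by (simp add: mpVar_power mult_single flip: single_of_nat)
  finally show ?thesis
    by (simp add: lookup_sum lookup_single_var_mult[OF var_free_power[OF assms(1)] assms(2)])
qed

lemma lookup_power_sum_var_powers_Suc:
  "Poly_Mapping.lookup ((\<Sum>i<Suc n. mpVar i ^ d) ^ k) (diag_exponent (Suc n) e)
   = (\<Sum>t\<le>k. if e = d * t
       then of_nat (k choose t) * Poly_Mapping.lookup ((\<Sum>i<n. mpVar i ^ d) ^ (k - t)) (diag_exponent n e)
       else 0)"
proof -
  have "var_free n (\<Sum>i<n. mpVar i ^ d)"
    by (intro var_free_sum var_free_mpVar_power) auto
  from lookup_power_add_var_power[OF this lookup_diag_exponent_self] show ?thesis
    by (simp add: diag_exponent_Suc add.commute)
qed

lemma lookup_power_sum_var_powers: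
  assumes "d > 0"
  shows "Poly_Mapping.lookup ((\<Sum>i<n. mpVar i ^ d :: 'a::comm_ring_1 mpoly) ^ k) (diag_exponent n (d * a))
       = (if k = n * a then of_nat (\<Prod>j<n. (Suc j * a) choose a) else 0)"
proof (induction n arbitrary: k)
  case 0
  then show ?case
    by (simp add: diag_exponent_def power_0_left)
next
  case (Suc n)
  let ?S = "\<Sum>i<n. mpVar i ^ d :: 'a mpoly"
  have "Poly_Mapping.lookup ((\<Sum>i<Suc n. mpVar i ^ d) ^ k) (diag_exponent (Suc n) (d * a))
      = (\<Sum>t\<le>k. if a = t then of_nat (k choose t) * Poly_Mapping.lookup (?S ^ (k - t)) (diag_exponent n (d * a)) else 0)"
    unfolding lookup_power_sum_var_powers_Suc using assms by simp
  also have "\<dots> = (if a \<le> k then of_nat (k choose a) * Poly_Mapping.lookup (?S ^ (k - a)) (diag_exponent n (d * a)) else 0)"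
    by simp
  also have "\<dots> = (if k = Suc n * a then of_nat (\<Prod>j<Suc n. (Suc j * a) choose a) else 0)"
  proof (cases "k = Suc n * a")
    case True
    then have "a \<le> k" and "k - a = n * a"
      by simp_all
    with True show ?thesis
      using Suc.IH[of "k - a"] by simp
  next
    case False
    then have "\<not> (a \<le> k \<and> k - a = n * a)"
      by auto
    with False show ?thesis
      using Suc.IH[of "k - a"] by auto
  qed
  finally show ?case .
qed

lemma lookup_power_sum_var_powers_not_dvd:
  assumes "\<not> d dvd e" and "n > 0"
  shows "Poly_Mapping.lookup ((\<Sum>i<n. mpVar i ^ d) ^ k) (diag_exponent n e) = 0"
proof -
  obtain n' where n: "n = Suc n'"
    using assms(2) gr0_conv_Suc by blast
  show ?thesis
    unfolding n lookup_power_sum_var_powers_Suc using assms(1) by (auto intro!: sum.neutral)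
qed

lemma lookup_power_fermat_diag:
  assumes "d > 0"
  shows "Poly_Mapping.lookup ((\<Sum>i<d. mpVar i ^ d :: 'a::comm_ring_1 mpoly) ^ k) (diag_exponent d k)
       = (if d dvd k then of_nat (\<Prod>j<d. (Suc j * (k div d)) choose (k div d)) else 0)"
  using lookup_power_sum_var_powers[OF assms, of d k "k div d", where 'a = 'a]
        lookup_power_sum_var_powers_not_dvd[of d k d k, where 'a = 'a] assms
  by auto

lemma lookup_power_add_monomial_diag:
  "Poly_Mapping.lookup ((p + mpConst c * (\<Prod>i<n. mpVar i)) ^ P) (diag_exponent n P)
   = (\<Sum>k\<le>P. of_nat (P choose k) * c ^ (P - k) * Poly_Mapping.lookup (p ^ k) (diag_exponent n k))"
proof -
  have monomial_power: "(mpConst c * (\<Prod>i<n. mpVar i)) ^ j = Poly_Mapping.single (diag_exponent n j) (c ^ j)" for j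
    by (simp only: power_mult_distrib mpConst_power prod_mpVar_power) (simp add: mpConst_def mult_single)
  have "(p + mpConst c * (\<Prod>i<n. mpVar i)) ^ P
      = (\<Sum>k\<le>P. (of_nat (P choose k) * (mpConst c * (\<Prod>i<n. mpVar i)) ^ (P - k)) * p ^ k)"
    by (simp add: binomial_ring ac_simps)
  also have "\<dots> = (\<Sum>k\<le>P. Poly_Mapping.single (diag_exponent n (P - k)) (of_nat (P choose k) * c ^ (P - k)) * p ^ k)"
    by (simp add: monomial_power of_nat_mult_single)
  moreover have "diag_exponent n P = diag_exponent n (P - k) + diag_exponent n k" if "k \<le> P" for k
    using that by (simp flip: diag_exponent_add)
  ultimately show ?thesis
    by (simp add: lookup_sum lookup_single_add_mult)
qed

lemma choose_add_mult_choose: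
  "(P choose (k + a)) * ((k + a) choose a) = (P choose k) * ((P - k) choose a)"
proof (cases "k + a \<le> P")
  case True
  then show ?thesis
    using choose_mult[of k "k + a" P] by (simp add: binomial_symmetric[of a "k + a", simplified])
next
  case False
  then show ?thesis
    by (cases "k \<le> P") (simp_all add: binomial_eq_0)
qed

lemma multi_binom_eq_choose_mult:
  "multi_binom P n a = (P choose (n * a)) * (\<Prod>j<n. (Suc j * a) choose a)"
proof (induction n)
  case (Suc n)
  have "(P choose (Suc n * a)) * (\<Prod>j<Suc n. (Suc j * a) choose a)
      = ((P choose (n * a + a)) * ((n * a + a) choose a)) * (\<Prod>j<n. (Suc j * a) choose a)"
    by (simp add: ac_simps)
  also have "\<dots> = multi_binom P (Suc n) a"
    using Suc.IH by (simp add: choose_add_mult_choose multi_binom_def)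
  finally show ?case ..
qed (simp add: multi_binom_def)

lemma sum_atMost_if_dvd:
  fixes d :: nat
  assumes "d > 0"
  shows "(\<Sum>k\<le>P. if d dvd k then f (k div d) else 0) = (\<Sum>i\<le>P div d. f i)"
proof -
  have "{k \<in> {..P}. d dvd k} = (\<lambda>i. d * i) ` {..P div d}"
    using assms by (auto simp: less_eq_div_iff_mult_less_eq mult.commute)
  then have "(\<Sum>k\<le>P. if d dvd k then f (k div d) else 0) = (\<Sum>k \<in> (\<lambda>i. d * i) ` {..P div d}. f (k div d))"
    by (simp flip: sum.inter_filter)
  also have "\<dots> = (\<Sum>i\<le>P div d. f i)"
    using assms by (simp add: sum.reindex inj_on_def)
  finally show ?thesis .
qed

lemma lookup_power_dwork_diag:
  fixes lam :: "'a::comm_ring_1"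
  assumes "d > 0"
  shows "Poly_Mapping.lookup ((mpConst lam * (\<Sum>i<d. mpVar i ^ d) - of_nat d * (\<Prod>i<d. mpVar i)) ^ P)
           (diag_exponent d P)
       = HD P d lam"
proof -
  define c where "c i = of_nat (multi_binom P d i) * (- of_nat d) ^ (P - i * d) * lam ^ (i * d)" for i
  have minus_monomial: "p - of_nat d * (\<Prod>i<d. mpVar i) = p + mpConst (- of_nat d) * (\<Prod>i<d. mpVar i)"
    for p :: "'a mpoly"
    by (simp add: mpConst_def single_uminus)
  have "Poly_Mapping.lookup ((mpConst lam * (\<Sum>i<d. mpVar i ^ d) - of_nat d * (\<Prod>i<d. mpVar i)) ^ P)
           (diag_exponent d P)
      = (\<Sum>k\<le>P. of_nat (P choose k) * (- of_nat d) ^ (P - k) * lam ^ k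
           * Poly_Mapping.lookup ((\<Sum>i<d. mpVar i ^ d) ^ k) (diag_exponent d k))"
    unfolding minus_monomial
    by (simp add: lookup_power_add_monomial_diag power_mult_distrib mpConst_power lookup_mpConst_mult)
       (simp add: ac_simps)
  also have "\<dots> = (\<Sum>k\<le>P. if d dvd k then c (k div d) else 0)"
    using assms by (intro sum.cong)
      (auto simp: lookup_power_fermat_diag c_def multi_binom_eq_choose_mult ac_simps elim!: dvdE)
  also have "\<dots> = (\<Sum>i\<le>P div d. c i)"
    using assms by (rule sum_atMost_if_dvd)
  also have "\<dots> = HD P d lam"
    by (simp add: HD_def c_def atLeast0AtMost)
  finally show ?thesis .
qed

theorem lemma3p8:
  fixes N P :: nat and lam :: "'a::comm_ring_1"
  assumes "N \<ge> 2"
  shows "HD P (N + 1) lam =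
    mpCoeff ((mpConst lam * (\<Sum>i\<le>N. mpVar i ^ (N + 1))
              - of_nat (N + 1) * (\<Prod>i\<le>N. mpVar i)) ^ P)
            (\<Sum>i\<le>N. Poly_Mapping.single i P)"
proof -
  have "(\<Sum>i\<le>N. Poly_Mapping.single i P) = diag_exponent (N + 1) P"
    by (simp add: diag_exponent_def lessThan_Suc_atMost)
  then show ?thesis
    using lookup_power_dwork_diag[of "N + 1" lam P]
    by (simp add: mpCoeff_def lessThan_Suc_atMost)
qed

end
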